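(* Let $R$ be a ring, $S\in\max\mathrm{Den}_l(R)$ and $T$ a left denominator set of $R$. Then $T\subseteq S$ if and only if $\mathrm{ass}(T)\subseteq\mathrm{ass}(S)$.
   Context: All rings are associative with $1$. A multiplicative subset $S$ of $R$ ($1\in S$, $0\notin S$, closed under multiplication) is a left Ore set if $Sr\cap Rs\neq\emptyset$ for all $r\in R$, $s\in S$; for it, $\mathrm{ass}(S):=\{r\in R: sr=0\text{ for some } s\in S\}$. A left Ore set $S$ is a left denominator set if $rs=0$ ($r\in R$, $s\in S$) implies $tr=0$ for some $t\in S$. $\max\mathrm{Den}_l(R)$ is the set of maximal elements, under inclusion, of the set of left denominator sets of $R$. *)

theory Defs
  imports Main
begin

definition mult_subset :: "'a::ring_1 set \<Rightarrow> bool" where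
  "mult_subset S \<longleftrightarrow> 1 \<in> S \<and> 0 \<notin> S \<and> (\<forall>s\<in>S. \<forall>t\<in>S. s * t \<in> S)"

definition left_ore_set :: "'a::ring_1 set \<Rightarrow> bool" where
  "left_ore_set S \<longleftrightarrow> mult_subset S \<and>
     (\<forall>r s. s \<in> S \<longrightarrow> (\<exists>s'\<in>S. \<exists>r'. s' * r = r' * s))"

definition ass :: "'a::ring_1 set \<Rightarrow> 'a set" where
  "ass S = {r. \<exists>s\<in>S. s * r = 0}"

definition left_den_set :: "'a::ring_1 set \<Rightarrow> bool" where
  "left_den_set S \<longleftrightarrow> left_ore_set S \<and>
     (\<forall>r s. s \<in> S \<longrightarrow> r * s = 0 \<longrightarrow> (\<exists>t\<in>S. t * r = 0))"

definition maxDen_l :: "'a::ring_1 set set" where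
  "maxDen_l = {S. left_den_set S \<and> (\<forall>T. left_den_set T \<longrightarrow> S \<subseteq> T \<longrightarrow> T = S)}"

end

theory Submission
  imports Defs
begin

text \<open>If \<open>ass T \<subseteq> ass S\<close>, the multiplicative closure of \<open>S \<union> T\<close> is again a left denominator
set: the Ore and reversibility conditions pass from generators to products, and every element
\<open>u\<close> of the closure is right regular modulo \<open>ass S\<close> (\<open>r * u \<in> ass S\<close> implies \<open>r \<in> ass S\<close>), which
keeps \<open>0\<close> out of it. Maximality of \<open>S\<close> then forces this closure to be \<open>S\<close>, so \<open>T \<subseteq> S\<close>.\<close>

inductive_set mult_closure :: "'a::times set \<Rightarrow> 'a set" for A where
  generator: "a \<in> A \<Longrightarrow> a \<in> mult_closure A"
| mult: "u \<in> mult_closure A \<Longrightarrow> v \<in> mult_closure A \<Longrightarrow> u * v \<in> mult_closure A"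

lemma left_ore_mult_closure:
  fixes A :: "'a::semigroup_mult set"
  assumes ore: "\<And>a r. a \<in> A \<Longrightarrow> \<exists>a'\<in>A. \<exists>r'. a' * r = r' * a"
    and "u \<in> mult_closure A"
  shows "\<exists>u'\<in>mult_closure A. \<exists>r'. u' * r = r' * u"
  using \<open>u \<in> mult_closure A\<close>
proof (induction arbitrary: r)
  case (generator a)
  then show ?case using ore by (meson mult_closure.generator)
next
  case (mult u1 u2)
  obtain v2 r2 where v2: "v2 \<in> mult_closure A" "v2 * r = r2 * u2"
    using mult.IH(2) by blast
  obtain v1 r1 where v1: "v1 \<in> mult_closure A" "v1 * r2 = r1 * u1"
    using mult.IH(1) by blast
  have "(v1 * v2) * r = r1 * (u1 * u2)"
    by (metis v1(2) v2(2) mult.assoc)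
  then show ?case using v1(1) v2(1) mult_closure.mult by blast
qed

lemma left_reversible_mult_closure:
  fixes A :: "'a::{semigroup_mult, zero} set"
  assumes reversible: "\<And>a r. a \<in> A \<Longrightarrow> r * a = 0 \<Longrightarrow> \<exists>a'\<in>A. a' * r = 0"
    and "u \<in> mult_closure A" and "r * u = 0"
  shows "\<exists>u'\<in>mult_closure A. u' * r = 0"
  using \<open>u \<in> mult_closure A\<close> \<open>r * u = 0\<close>
proof (induction arbitrary: r)
  case (generator a)
  then show ?case using reversible by (meson mult_closure.generator)
next
  case (mult u1 u2)
  have "(r * u1) * u2 = 0" using mult.prems by (simp add: mult.assoc)
  then obtain v2 where v2: "v2 \<in> mult_closure A" "v2 * (r * u1) = 0"
    using mult.IH(2) by blast
  then have "(v2 * r) * u1 = 0" by (simp add: mult.assoc)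
  then obtain v1 where v1: "v1 \<in> mult_closure A" "v1 * (v2 * r) = 0"
    using mult.IH(1) by blast
  then have "(v1 * v2) * r = 0" by (simp add: mult.assoc)
  then show ?case using v1(1) v2(1) mult_closure.mult by blast
qed

lemma right_cancel_mult_closure:
  fixes A :: "'a::semigroup_mult set"
  assumes cancel: "\<And>a r. a \<in> A \<Longrightarrow> r * a \<in> I \<Longrightarrow> r \<in> I"
    and "u \<in> mult_closure A" and "r * u \<in> I"
  shows "r \<in> I"
  using \<open>u \<in> mult_closure A\<close> \<open>r * u \<in> I\<close>
proof (induction arbitrary: r)
  case (generator a)
  then show ?case using cancel by blast
next
  case (mult u1 u2)
  have "(r * u1) * u2 \<in> I" using mult.prems by (simp add: mult.assoc)
  then show ?case using mult.IH by blast
qed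

lemma one_notin_ass: "mult_subset S \<Longrightarrow> 1 \<notin> ass S"
  unfolding mult_subset_def ass_def by auto

lemma ass_left_cancel:
  assumes "mult_subset S" and "s \<in> S" and "s * r \<in> ass S"
  shows "r \<in> ass S"
proof -
  obtain s' where "s' \<in> S" "(s' * s) * r = 0"
    using \<open>s * r \<in> ass S\<close> unfolding ass_def by (auto simp: mult.assoc)
  moreover have "s' * s \<in> S"
    using assms(1,2) \<open>s' \<in> S\<close> unfolding mult_subset_def by blast
  ultimately show ?thesis unfolding ass_def by blast
qed

lemma ass_right_cancel:
  assumes S: "left_den_set S" and T: "left_den_set T" and "ass T \<subseteq> ass S"
    and "t \<in> T" and "r * t \<in> ass S"
  shows "r \<in> ass S"
proof -
  obtain s where s: "s \<in> S" "(s * r) * t = 0"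
    using \<open>r * t \<in> ass S\<close> unfolding ass_def by (auto simp: mult.assoc)
  then obtain t' where "t' \<in> T" "t' * (s * r) = 0"
    using T \<open>t \<in> T\<close> unfolding left_den_set_def by blast
  then have "s * r \<in> ass S" using \<open>ass T \<subseteq> ass S\<close> unfolding ass_def by blast
  moreover have "mult_subset S" using S unfolding left_den_set_def left_ore_set_def by blast
  ultimately show ?thesis using ass_left_cancel s(1) by blast
qed

lemma left_den_set_mult_closure_Un:
  assumes S: "left_den_set S" and T: "left_den_set T" and "ass T \<subseteq> ass S"
  shows "left_den_set (mult_closure (S \<union> T))"
proof -
  let ?C = "mult_closure (S \<union> T)"
  have S_mult: "mult_subset S" using S unfolding left_den_set_def left_ore_set_def by blast
  have ore: "\<exists>a'\<in>S \<union> T. \<exists>r'. a' * r = r' * a" if "a \<in> S \<union> T" for a r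
    using that S T unfolding left_den_set_def left_ore_set_def by blast
  have reversible: "\<exists>a'\<in>S \<union> T. a' * r = 0" if "a \<in> S \<union> T" "r * a = 0" for a r
    using that S T unfolding left_den_set_def by blast
  have cancel: "r \<in> ass S" if "a \<in> S \<union> T" "r * a \<in> ass S" for a r
    using that ass_right_cancel[OF S S] ass_right_cancel[OF S T \<open>ass T \<subseteq> ass S\<close>] by blast
  have "1 \<in> ?C" using S_mult mult_closure.generator unfolding mult_subset_def by blast
  moreover have "0 \<notin> ?C"
  proof
    assume "0 \<in> ?C"
    have "1 * 0 \<in> ass S" using S_mult unfolding mult_subset_def ass_def by force
    with cancel \<open>0 \<in> ?C\<close> have "1 \<in> ass S" by (rule right_cancel_mult_closure)
    with S_mult show False by (simp add: one_notin_ass)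
  qed
  ultimately have "mult_subset ?C"
    unfolding mult_subset_def by (blast intro: mult_closure.mult)
  moreover have "\<exists>u'\<in>?C. \<exists>r'. u' * r = r' * u" if "u \<in> ?C" for u r
    using ore that by (rule left_ore_mult_closure)
  moreover have "\<exists>u'\<in>?C. u' * r = 0" if "u \<in> ?C" "r * u = 0" for u r
    using reversible that by (rule left_reversible_mult_closure)
  ultimately show ?thesis
    unfolding left_den_set_def left_ore_set_def by blast
qed

theorem corollary2p3:
  fixes S T :: "'a::ring_1 set"
  assumes "S \<in> maxDen_l" and "left_den_set T"
  shows "T \<subseteq> S \<longleftrightarrow> ass T \<subseteq> ass S"
proof
  assume "T \<subseteq> S"
  then show "ass T \<subseteq> ass S" unfolding ass_def by blast
next
  assume "ass T \<subseteq> ass S"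
  have S: "left_den_set S" using assms(1) unfolding maxDen_l_def by blast
  have "left_den_set (mult_closure (S \<union> T))"
    using left_den_set_mult_closure_Un[OF S assms(2) \<open>ass T \<subseteq> ass S\<close>] .
  moreover have "S \<subseteq> mult_closure (S \<union> T)" using mult_closure.generator by blast
  ultimately have "mult_closure (S \<union> T) = S" using assms(1) unfolding maxDen_l_def by blast
  then show "T \<subseteq> S" using mult_closure.generator by blast
qed

end
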